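(* Assume the general coarsening setting described in the context. Let $\mathbf{1}$ denote the path identically equal to $1$, i.e. $\{R=\mathbf{1}\}=\{R_t=1 \text{ for all } t\ge 0\}$. Then the mechanism leading to incomplete data is ignorable on $\mathbf{1}$: for all $\theta\in\Theta$ and every $\psi_0\in\Psi$, $$\mathcal{L}^{(\theta,\psi_0)/(\theta_0,\psi_0)}_{\mathcal{O}}=\mathcal{L}^{\theta/\theta_0}_{\mathcal{X}}\quad\text{a.s. on } \{R_t=1,\ t\ge 0\}.$$
   Context: Setting (general coarsening model for processes). On a measurable space $(\Omega,\mathcal{F})$ live two càdlàg stochastic processes: $X=(X_t)_{t\ge0}$ with values in $\mathbb{R}^d$ (path space a Skorohod space with its Borel $\sigma$-field) and a response indicator process $R=(R_t)_{t\ge0}$ with values in $\{0,1\}$ (componentwise if multivariate), $R_t=1$ meaning that $X_t$ is observed. Let $\mathcal{X}=\sigma(X_t,t\ge0)$, $\mathcal{R}=\sigma(R_t,t\ge0)$ and $\mathcal{F}=\mathcal{X}\vee\mathcal{R}$. A model is a family $\{P_{(\theta,\psi)}:(\theta,\psi)\in\Theta\times\Psi\}$ of mutually equivalent probability measures on $\mathcal{F}$ (parameter spaces possibly infinite-dimensional), with reference measure $P_{(\theta_0,\psi_0)}$; the restriction of $P_{(\theta,\psi)}$ to $\mathcal{X}$ depends only on $\theta$ and is denoted $P_\theta$. Non-informativeness is assumed: $P_{(\theta_1,\psi)}(A\mid\mathcal{X})=P_{(\theta_2,\psi)}(A\mid\mathcal{X})$ a.s. for all $A\in\mathcal{R}$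 and all $\theta_1,\theta_2,\psi$. For a sub-$\sigma$-field $\mathcal{G}$, $\mathcal{L}^{(\theta,\psi)/(\theta_0,\psi_0)}_{\mathcal{G}}$ denotes the Radon–Nikodym derivative of $P_{(\theta,\psi)}$ with respect to $P_{(\theta_0,\psi_0)}$ restricted to $\mathcal{G}$; for $\mathcal{G}\subset\mathcal{X}$ it depends only on $\theta,\theta_0$ and is written $\mathcal{L}^{\theta/\theta_0}_{\mathcal{G}}$. The observed $\sigma$-field is $\mathcal{O}=\sigma(R_tX_t,R_t,\ t\ge0)$. For a deterministic path $r=(r_t)$, $\{R=r\}=\{R_t=r_t\ \forall t\ge0\}$ and $\mathcal{X}^r=\sigma(r_tX_t,\ t\ge0)$. The mechanism is called ignorable on $r$ if $\mathcal{L}^{(\theta,\psi_0)/(\theta_0,\psi_0)}_{\mathcal{O}}=\mathcal{L}^{\theta/\theta_0}_{\mathcal{X}^r}$ a.s. on $\{R=r\}$ for all $\theta$, whatever $\psi_0$. *)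

theory Defs
  imports "HOL-Probability.Probability"
begin

definition cadlag :: "(real \<Rightarrow> 'b::topological_space) \<Rightarrow> bool" where
  "cadlag f \<longleftrightarrow> (\<forall>t\<ge>0. continuous (at_right t) f) \<and>
                 (\<forall>t>0. \<exists>l. (f \<longlongrightarrow> l) (at_left t))"

definition proc_sigma :: "'a set \<Rightarrow> (real \<Rightarrow> 'a \<Rightarrow> 'b::topological_space) \<Rightarrow> 'a measure" where
  "proc_sigma \<Omega> Y = sigma \<Omega> (\<Union>t\<in>{0..}. {Y t -` B \<inter> \<Omega> | B. B \<in> sets borel})"

text \<open>Componentwise product r_t x_t (observed value, 0 where unobserved).\<close>
definition cmult :: "real^'d \<Rightarrow> real^'d \<Rightarrow> real^'d" where
  "cmult r x = (\<chi> i. r $ i * x $ i)"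

definition one_vec :: "real^'d" where
  "one_vec = (\<chi> i. 1)"

definition LR :: "'a measure \<Rightarrow> 'a measure \<Rightarrow> 'a measure \<Rightarrow> 'a \<Rightarrow> ennreal" where
  "LR G Q P = RN_deriv (restr_to_subalg P G) (restr_to_subalg Q G)"

end

theory Submission
  imports Defs
begin

text \<open>The event \<open>S = {R = 1}\<close> is observable: by right-continuity it is determined by \<open>R\<close> at the
  nonnegative rationals. On \<open>S\<close> the observed information and the complete data \<open>X\<close> have the same
  trace. Non-informativeness says that the conditional probability of \<open>S\<close> given \<open>X\<close> does not depend
  on \<open>\<theta>\<close>; this makes the likelihood ratio \<open>L\<^sub>X\<close> of \<open>X\<close> a density of \<open>P\<^sub>\<theta>\<close> with respect to \<open>P\<^sub>\<theta>\<^sub>0\<close> on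
  all sets \<open>S \<inter> B\<close>, \<open>B \<in> \<sigma>(X)\<close>, which by the trace identity are all sets \<open>S \<inter> A\<close> with \<open>A\<close> observed.
  Hence \<open>L\<^sub>X 1\<^sub>S\<close> and \<open>L\<^sub>O 1\<^sub>S\<close> are observed-measurable densities of the same measure and agree a.s.\<close>

lemma space_proc_sigma [simp]: "space (proc_sigma \<Omega> Z) = \<Omega>"
  unfolding proc_sigma_def by (rule space_measure_of_conv)

lemma sets_proc_sigma:
  "sets (proc_sigma \<Omega> Z) = sigma_sets \<Omega> (\<Union>t\<in>{0..}. {Z t -` B \<inter> \<Omega> | B. B \<in> sets borel})"
  unfolding proc_sigma_def by (rule sets_measure_of) blast

lemma measurable_proc_sigma:
  assumes "t \<ge> 0"
  shows "Z t \<in> borel_measurable (proc_sigma \<Omega> Z)"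
proof (rule measurableI)
  fix B :: "'b set" assume "B \<in> sets borel"
  then show "Z t -` B \<inter> space (proc_sigma \<Omega> Z) \<in> sets (proc_sigma \<Omega> Z)"
    using assms unfolding sets_proc_sigma by (intro sigma_sets.Basic) auto
qed simp

lemma subalgebra_proc_sigma:
  assumes "\<And>t. t \<ge> 0 \<Longrightarrow> Z t \<in> borel_measurable M" and "sets N = sets M"
  shows "subalgebra N (proc_sigma (space M) Z)"
proof -
  have "sets (proc_sigma (space M) Z) \<subseteq> sets M"
    unfolding sets_proc_sigma
    by (rule sets.sigma_sets_subset) (auto intro: measurable_sets[OF assms(1)])
  then show ?thesis
    using assms(2) sets_eq_imp_space_eq[OF assms(2)] by (simp add: subalgebra_def)
qed

lemma right_continuous_eq_if_eq_on_Rats: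
  fixes f :: "real \<Rightarrow> 'b::t1_space"
  assumes "continuous (at_right t) f" and "\<And>q. q \<in> \<rat> \<Longrightarrow> q > t \<Longrightarrow> f q = c"
  shows "f t = c"
proof (rule ccontr)
  assume "f t \<noteq> c"
  with assms(1) have "eventually (\<lambda>s. f s \<in> - {c}) (at_right t)"
    by (intro topological_tendstoD) (auto simp: continuous_within)
  then obtain b where "b > t" and b: "\<And>s. s > t \<Longrightarrow> s < b \<Longrightarrow> f s \<noteq> c"
    unfolding eventually_at_right_field by auto
  then obtain q where "q \<in> \<rat>" "t < q" "q < b"
    using Rats_dense_in_real by blast
  with assms(2) b show False by auto
qed

lemma cadlag_const_path_set_in_sets:
  fixes Z :: "real \<Rightarrow> 'a \<Rightarrow> 'b::t1_space"
  assumes "\<And>\<omega>. \<omega> \<in> space N \<Longrightarrow> cadlag (\<lambda>t. Z t \<omega>)"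
    and "\<And>t. t \<ge> 0 \<Longrightarrow> Z t \<in> borel_measurable N"
  shows "{\<omega> \<in> space N. \<forall>t\<ge>0. Z t \<omega> = c} \<in> sets N"
proof -
  define Q :: "real set" where "Q = {q \<in> \<rat>. 0 \<le> q}"
  have "{\<omega> \<in> space N. \<forall>t\<ge>0. Z t \<omega> = c} = (\<Inter>q\<in>Q. {\<omega> \<in> space N. Z q \<omega> = c})"
  proof (intro set_eqI iffI)
    fix \<omega> assume \<omega>: "\<omega> \<in> (\<Inter>q\<in>Q. {\<omega> \<in> space N. Z q \<omega> = c})"
    have "Z t \<omega> = c" if "t \<ge> 0" for t
    proof (rule right_continuous_eq_if_eq_on_Rats)
      show "continuous (at_right t) (\<lambda>t. Z t \<omega>)"
        using assms(1) \<omega> \<open>t \<ge> 0\<close> unfolding cadlag_def Q_def by auto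
    qed (use \<omega> \<open>t \<ge> 0\<close> in \<open>auto simp: Q_def\<close>)
    with \<omega> show "\<omega> \<in> {\<omega> \<in> space N. \<forall>t\<ge>0. Z t \<omega> = c}"
      by (auto simp: Q_def)
  qed (auto simp: Q_def)
  also have "\<dots> \<in> sets N"
  proof (rule sets.countable_INT')
    show "countable Q" unfolding Q_def by (rule countable_subset[OF _ countable_rat]) auto
    show "Q \<noteq> {}" by (auto simp: Q_def)
    show "(\<lambda>q. {\<omega> \<in> space N. Z q \<omega> = c}) ` Q \<subseteq> sets N"
      using assms(2) by (auto simp: Q_def)
  qed
  finally show ?thesis .
qed

lemma sets_restrict_proc_sigma_subset:
  assumes "S \<subseteq> \<Omega>" and "space N = \<Omega>"
    and "\<And>t. t \<ge> 0 \<Longrightarrow> \<exists>g\<in>borel_measurable N. \<forall>\<omega>\<in>S. Z t \<omega> = g \<omega>"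
  shows "sets (restrict_space (proc_sigma \<Omega> Z) S) \<subseteq> sets (restrict_space N S)"
proof -
  have "\<exists>B\<in>sets N. S \<inter> A = S \<inter> B" if "A \<in> sets (proc_sigma \<Omega> Z)" for A
    using that unfolding sets_proc_sigma
  proof induction
    case (Basic A)
    then obtain t C where "t \<ge> 0" "C \<in> sets borel" and A: "A = Z t -` C \<inter> \<Omega>" by blast
    then obtain g where g: "g \<in> borel_measurable N" "\<forall>\<omega>\<in>S. Z t \<omega> = g \<omega>"
      using assms(3) by blast
    have "g -` C \<inter> space N \<in> sets N"
      using g(1) \<open>C \<in> sets borel\<close> by measurable
    moreover have "S \<inter> A = S \<inter> (g -` C \<inter> space N)"
      using A g(2) assms(1,2) by auto
    ultimately show ?case by blast
  next
    case (Compl A)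
    then obtain B where "B \<in> sets N" "S \<inter> A = S \<inter> B" by blast
    then have "space N - B \<in> sets N" "S \<inter> (\<Omega> - A) = S \<inter> (space N - B)"
      using assms(1,2) by auto
    then show ?case by blast
  next
    case (Union A)
    then obtain B where "\<And>i. B i \<in> sets N \<and> S \<inter> A i = S \<inter> B i" by metis
    then have "(\<Union>i. B i) \<in> sets N" "S \<inter> (\<Union>i. A i) = S \<inter> (\<Union>i. B i)" by auto
    then show ?case by blast
  qed auto
  then show ?thesis by (auto simp: sets_restrict_space)
qed

context
  fixes P0 P1 G :: "'a measure"
  assumes finite_P0: "finite_measure P0" and finite_P1: "finite_measure P1"
    and sets_P1: "sets P1 = sets P0"
    and abs_cont: "absolutely_continuous P0 P1"
    and subalg: "subalgebra P0 G"
begin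

private lemma subalg_P1: "subalgebra P1 G"
  using subalg sets_P1 sets_eq_imp_space_eq[OF sets_P1] by (simp add: subalgebra_def)

private lemma restr_RN:
  "sigma_finite_measure (restr_to_subalg P0 G)"
  "sigma_finite_measure (restr_to_subalg P1 G)"
  "absolutely_continuous (restr_to_subalg P0 G) (restr_to_subalg P1 G)"
  "sets (restr_to_subalg P1 G) = sets (restr_to_subalg P0 G)"
  using finite_measure_restr_to_subalg[OF subalg finite_P0]
    finite_measure_restr_to_subalg[OF subalg_P1 finite_P1] abs_cont
  by (auto simp: finite_measure_def absolutely_continuous_def sets_restr_to_subalg subalg subalg_P1
      null_sets_restr_to_subalg)

private lemma borel_measurable_restr:
  "borel_measurable (restr_to_subalg P0 G) = borel_measurable G"
  by (rule measurable_cong_sets[OF sets_restr_to_subalg[OF subalg] refl])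

lemma measurable_LR [measurable]: "LR G P1 P0 \<in> borel_measurable G"
  using borel_measurable_RN_deriv borel_measurable_restr
  unfolding LR_def by blast

lemma LR_finite: "AE x in P0. LR G P1 P0 x \<noteq> \<infinity>"
  using sigma_finite_measure.RN_deriv_finite[OF restr_RN] AE_restr_to_subalg[OF subalg]
  unfolding LR_def by blast

lemma emeasure_eq_nn_integral_LR:
  assumes "B \<in> sets G"
  shows "emeasure P1 B = (\<integral>\<^sup>+x. LR G P1 P0 x * indicator B x \<partial>P0)"
proof -
  have "emeasure P1 B = emeasure (density (restr_to_subalg P0 G) (LR G P1 P0)) B"
    using sigma_finite_measure.density_RN_deriv[OF restr_RN(1,3,4)] assms
    by (simp add: LR_def emeasure_restr_to_subalg[OF subalg_P1])
  also have "\<dots> = (\<integral>\<^sup>+x. LR G P1 P0 x * indicator B x \<partial>P0)"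
  proof (subst emeasure_density)
    show "LR G P1 P0 \<in> borel_measurable (restr_to_subalg P0 G)" "B \<in> sets (restr_to_subalg P0 G)"
      using assms measurable_LR
      by (simp_all add: sets_restr_to_subalg[OF subalg] borel_measurable_restr)
  qed (use assms in \<open>simp add: nn_integral_subalgebra2[OF subalg]\<close>)
  finally show ?thesis .
qed

lemma
  assumes "f \<in> borel_measurable G"
  shows integrable_LR_iff:
      "integrable P1 f \<longleftrightarrow> integrable P0 (\<lambda>x. enn2real (LR G P1 P0 x) * f x)"
    and integral_LR: "integral\<^sup>L P1 f = (\<integral>x. enn2real (LR G P1 P0 x) * f x \<partial>P0)"
proof -
  have f: "f \<in> borel_measurable (restr_to_subalg P0 G)"
    using assms by (simp add: borel_measurable_restr)
  have Lf: "(\<lambda>x. enn2real (LR G P1 P0 x) * f x) \<in> borel_measurable G"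
    using assms by measurable
  show "integrable P1 f \<longleftrightarrow> integrable P0 (\<lambda>x. enn2real (LR G P1 P0 x) * f x)"
    using sigma_finite_measure.RN_deriv_integrable[OF restr_RN f] unfolding LR_def[symmetric]
    by (metis Lf assms integrable_from_subalg integrable_in_subalg subalg subalg_P1)
  show "integral\<^sup>L P1 f = (\<integral>x. enn2real (LR G P1 P0 x) * f x \<partial>P0)"
    using sigma_finite_measure.RN_deriv_integral[OF restr_RN f] unfolding LR_def[symmetric]
    by (simp add: integral_subalgebra2[OF subalg Lf] integral_subalgebra2[OF subalg_P1 assms])
qed

lemma integrable_LR_mult_indicator:
  assumes "C \<in> sets P0"
  shows "integrable P0 (\<lambda>x. enn2real (LR G P1 P0 x) * indicator C x)"
proof -
  interpret P1: finite_measure P1 by (rule finite_P1)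
  have "integrable P0 (\<lambda>x. enn2real (LR G P1 P0 x) * 1)"
    using integrable_LR_iff[of "\<lambda>_. 1"] by simp
  then show ?thesis
    using integrable_real_mult_indicator[OF assms] by simp
qed

lemma nn_integral_LR_indicator:
  assumes "C \<in> sets P0"
  shows "(\<integral>\<^sup>+x. LR G P1 P0 x * indicator C x \<partial>P0) =
    ennreal (\<integral>x. enn2real (LR G P1 P0 x) * indicator C x \<partial>P0)"
proof -
  have "(\<integral>\<^sup>+x. LR G P1 P0 x * indicator C x \<partial>P0) =
      (\<integral>\<^sup>+x. ennreal (enn2real (LR G P1 P0 x) * indicator C x) \<partial>P0)"
    using LR_finite
    by (intro nn_integral_cong_AE, eventually_elim) (simp add: less_top split: split_indicator)
  also have "\<dots> = ennreal (\<integral>x. enn2real (LR G P1 P0 x) * indicator C x \<partial>P0)"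
    by (rule nn_integral_eq_integral[OF integrable_LR_mult_indicator[OF assms]]) simp
  finally show ?thesis .
qed

lemma emeasure_Int_eq_nn_integral_LR:
  assumes A: "A \<in> sets P0" and B [measurable]: "B \<in> sets G"
    and cond_exp_eq:
      "AE x in P1. real_cond_exp P1 G (indicator A) x = real_cond_exp P0 G (indicator A) x"
  shows "emeasure P1 (A \<inter> B) = (\<integral>\<^sup>+x. LR G P1 P0 x * indicator (A \<inter> B) x \<partial>P0)"
proof -
  interpret P0: finite_measure_subalgebra P0 G
    using finite_P0 subalg by (simp add: finite_measure_subalgebra_def finite_measure_subalgebra_axioms_def)
  interpret P1: finite_measure_subalgebra P1 G
    using finite_P1 subalg_P1 by (simp add: finite_measure_subalgebra_def finite_measure_subalgebra_axioms_def)
  define L where "L x = enn2real (LR G P1 P0 x)" for x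
  define c0 where "c0 = real_cond_exp P0 G (indicator A)"
  have [measurable]: "L \<in> borel_measurable G" "c0 \<in> borel_measurable G"
    unfolding L_def c0_def by measurable
  have A1: "A \<in> sets P1" and B1: "B \<in> sets P1" and B0: "B \<in> sets P0"
    using A B sets_P1 subalg subalg_P1 by (auto simp: subalgebra_def)
  have "measure P1 (A \<inter> B) = (\<integral>x\<in>B. indicator A x \<partial>P1)"
    using A1 B1 by (simp add: set_lebesgue_integral_def indicator_inter_arith[symmetric]
        Int_absorb2 Int_commute sets.sets_into_space)
  also have "\<dots> = (\<integral>x\<in>B. real_cond_exp P1 G (indicator A) x \<partial>P1)"
    using A1 by (intro P1.real_cond_exp_intA B) (simp add: less_top[symmetric])
  also have "\<dots> = (\<integral>x. indicator B x * c0 x \<partial>P1)"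
    unfolding set_lebesgue_integral_def
  proof (rule integral_cong_AE)
    show "(\<lambda>x. indicator B x *\<^sub>R real_cond_exp P1 G (indicator A) x) \<in> borel_measurable P1"
      "(\<lambda>x. indicator B x * c0 x) \<in> borel_measurable P1"
      by (intro measurable_from_subalg[OF subalg_P1]; measurable)+
    show "AE x in P1. indicator B x *\<^sub>R real_cond_exp P1 G (indicator A) x = indicator B x * c0 x"
      using cond_exp_eq by eventually_elim (simp add: c0_def)
  qed
  also have "\<dots> = (\<integral>x. (L x * indicator B x) * c0 x \<partial>P0)"
    by (subst integral_LR) (simp_all add: L_def mult_ac)
  also have "\<dots> = (\<integral>x. (L x * indicator B x) * indicator A x \<partial>P0)"
    unfolding c0_def
  proof (rule P0.real_cond_exp_intg(2))
    show "integrable P0 (\<lambda>x. L x * indicator B x * indicator A x)"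
      using integrable_LR_mult_indicator[OF sets.Int[OF A B0]]
      by (simp add: L_def indicator_inter_arith mult_ac)
  qed (use A in measurable)
  also have "\<dots> = (\<integral>x. L x * indicator (A \<inter> B) x \<partial>P0)"
    by (simp add: indicator_inter_arith mult_ac)
  finally show ?thesis
    using A B0 by (simp add: P1.emeasure_eq_measure nn_integral_LR_indicator L_def)
qed

lemma AE_LR_eq_on_trace:
  assumes S [measurable]: "S \<in> sets G"
    and trace_eq: "sets (restrict_space G S) = sets (restrict_space H S)"
    and h: "h \<in> borel_measurable H"
    and h_density: "\<And>B. B \<in> sets H \<Longrightarrow>
      emeasure P1 (S \<inter> B) = (\<integral>\<^sup>+x. h x * indicator (S \<inter> B) x \<partial>P0)"
  shows "AE x in P0. x \<in> S \<longrightarrow> LR G P1 P0 x = h x"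
proof -
  interpret M: sigma_finite_measure "restr_to_subalg P0 G" by (rule restr_RN(1))
  define hS where "hS x = (if x \<in> S then h x else 0)" for x
  define LS where "LS x = (if x \<in> S then LR G P1 P0 x else 0)" for x
  have "h \<in> borel_measurable (restrict_space G S)"
    using measurable_restrict_space1[OF h] measurable_cong_sets[OF trace_eq refl] by blast
  then have [measurable]: "hS \<in> borel_measurable G"
    unfolding hS_def using S by (subst measurable_restrict_space_iff[symmetric]) auto
  have [measurable]: "LS \<in> borel_measurable G"
    unfolding LS_def by measurable
  have "AE x in restr_to_subalg P0 G. LS x = hS x"
  proof (rule M.density_unique2)
    show "LS \<in> borel_measurable (restr_to_subalg P0 G)" "hS \<in> borel_measurable (restr_to_subalg P0 G)"
      by (simp_all add: borel_measurable_restr)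
    fix A assume "A \<in> sets (restr_to_subalg P0 G)"
    then have A [measurable]: "A \<in> sets G"
      by (simp add: sets_restr_to_subalg[OF subalg])
    then have "S \<inter> A \<in> sets (restrict_space H S)"
      unfolding trace_eq[symmetric] unfolding sets_restrict_space by (rule imageI)
    then obtain B where "B \<in> sets H" and SA: "S \<inter> A = S \<inter> B"
      unfolding sets_restrict_space by (elim imageE)
    have "(\<integral>\<^sup>+x\<in>A. LS x \<partial>restr_to_subalg P0 G) = (\<integral>\<^sup>+x\<in>A. LS x \<partial>P0)"
      by (rule nn_integral_subalgebra2[OF subalg]) measurable
    also have "\<dots> = (\<integral>\<^sup>+x. LR G P1 P0 x * indicator (S \<inter> A) x \<partial>P0)"
      unfolding LS_def by (intro nn_integral_cong) (simp split: split_indicator)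
    also have "\<dots> = emeasure P1 (S \<inter> B)"
      unfolding SA[symmetric] by (rule emeasure_eq_nn_integral_LR[symmetric]) measurable
    also have "\<dots> = (\<integral>\<^sup>+x. h x * indicator (S \<inter> A) x \<partial>P0)"
      using SA h_density[OF \<open>B \<in> sets H\<close>] by simp
    also have "\<dots> = (\<integral>\<^sup>+x\<in>A. hS x \<partial>P0)"
      unfolding hS_def by (intro nn_integral_cong) (simp split: split_indicator)
    also have "\<dots> = (\<integral>\<^sup>+x\<in>A. hS x \<partial>restr_to_subalg P0 G)"
      by (rule nn_integral_subalgebra2[OF subalg, symmetric]) measurable
    finally show "(\<integral>\<^sup>+x\<in>A. LS x \<partial>restr_to_subalg P0 G) = (\<integral>\<^sup>+x\<in>A. hS x \<partial>restr_to_subalg P0 G)" .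
  qed
  then have "AE x in P0. LS x = hS x"
    by (rule AE_restr_to_subalg[OF subalg])
  then show ?thesis
    by eventually_elim (simp add: LS_def hS_def split: if_splits)
qed

end

definition observation ::
    "(real \<Rightarrow> 'a \<Rightarrow> real^'d) \<Rightarrow> (real \<Rightarrow> 'a \<Rightarrow> real^'d) \<Rightarrow> real \<Rightarrow> 'a \<Rightarrow> (real^'d) \<times> (real^'d)" where
  "observation R X t \<omega> = (cmult (R t \<omega>) (X t \<omega>), R t \<omega>)"

lemma cmult_one_vec [simp]: "cmult one_vec x = x"
  by (simp add: cmult_def one_vec_def vec_eq_iff)

lemma continuous_on_cmult: "continuous_on UNIV (\<lambda>p. cmult (fst p) (snd p))"
  unfolding cmult_def by (intro continuous_on_vec_lambda continuous_intros)

lemma measurable_observation: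
  assumes "X t \<in> borel_measurable M" and "R t \<in> borel_measurable M"
  shows "observation R X t \<in> borel_measurable M"
  unfolding observation_def
  using borel_measurable_continuous_Pair[OF assms(2,1) continuous_on_cmult] assms(2)
  by (rule borel_measurable_Pair)

lemma complete_observation_in_sets:
  assumes "\<And>\<omega>. \<omega> \<in> \<Omega> \<Longrightarrow> cadlag (\<lambda>t. R t \<omega>)"
  shows "{\<omega> \<in> \<Omega>. \<forall>t\<ge>0. R t \<omega> = one_vec} \<in> sets (proc_sigma \<Omega> (observation R X))"
proof -
  have "R t \<in> borel_measurable (proc_sigma \<Omega> (observation R X))" if "t \<ge> 0" for t
  proof -
    have "(\<lambda>\<omega>. snd (observation R X t \<omega>)) \<in> borel_measurable (proc_sigma \<Omega> (observation R X))"
      using borel_measurable_continuous_on[OF continuous_on_snd[OF continuous_on_id]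
          measurable_proc_sigma[OF that]] .
    then show ?thesis by (simp add: observation_def)
  qed
  then show ?thesis
    using cadlag_const_path_set_in_sets[of "proc_sigma \<Omega> (observation R X)" R] assms by simp
qed

lemma sets_restrict_complete_observation:
  fixes R X :: "real \<Rightarrow> 'a \<Rightarrow> real^'d" and \<Omega> :: "'a set"
  defines "S \<equiv> {\<omega> \<in> \<Omega>. \<forall>t\<ge>0. R t \<omega> = one_vec}"
  shows "sets (restrict_space (proc_sigma \<Omega> (observation R X)) S) =
    sets (restrict_space (proc_sigma \<Omega> X) S)"
proof (rule antisym; rule sets_restrict_proc_sigma_subset)
  fix t :: real assume "t \<ge> 0"
  show "\<exists>g\<in>borel_measurable (proc_sigma \<Omega> X). \<forall>\<omega>\<in>S. observation R X t \<omega> = g \<omega>"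
    using \<open>t \<ge> 0\<close> measurable_proc_sigma[of t X \<Omega>]
    by (intro bexI[of _ "\<lambda>\<omega>. (X t \<omega>, one_vec)"]) (auto simp: S_def observation_def)
  show "\<exists>g\<in>borel_measurable (proc_sigma \<Omega> (observation R X)). \<forall>\<omega>\<in>S. X t \<omega> = g \<omega>"
    using borel_measurable_continuous_on[OF continuous_on_fst[OF continuous_on_id]
        measurable_proc_sigma[of t "observation R X" \<Omega>]] \<open>t \<ge> 0\<close>
    by (intro bexI[of _ "\<lambda>\<omega>. fst (observation R X t \<omega>)"]) (auto simp: S_def observation_def)
qed (auto simp: S_def)

lemma AE_LR_observation_eq_on_complete_observation:
  fixes M :: "'a measure" and X R :: "real \<Rightarrow> 'a \<Rightarrow> real^'d"
  defines "S \<equiv> {\<omega> \<in> space M. \<forall>t\<ge>0. R t \<omega> = one_vec}"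
  assumes finite: "finite_measure P0" "finite_measure P1"
    and sets_P: "sets P0 = sets M" "sets P1 = sets M"
    and abs_cont: "absolutely_continuous P0 P1"
    and X_meas: "\<And>t. t \<ge> 0 \<Longrightarrow> X t \<in> borel_measurable M"
    and R_meas: "\<And>t. t \<ge> 0 \<Longrightarrow> R t \<in> borel_measurable M"
    and R_cadlag: "\<And>\<omega>. \<omega> \<in> space M \<Longrightarrow> cadlag (\<lambda>t. R t \<omega>)"
    and cond_exp_eq: "AE \<omega> in P1.
      real_cond_exp P1 (proc_sigma (space M) X) (indicator S) \<omega> =
      real_cond_exp P0 (proc_sigma (space M) X) (indicator S) \<omega>"
  shows "AE \<omega> in P0. (\<forall>t\<ge>0. R t \<omega> = one_vec) \<longrightarrow>
    LR (proc_sigma (space M) (observation R X)) P1 P0 \<omega> = LR (proc_sigma (space M) X) P1 P0 \<omega>"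
proof -
  let ?GX = "proc_sigma (space M) X" and ?GO = "proc_sigma (space M) (observation R X)"
  have sets_P1: "sets P1 = sets P0"
    using sets_P by simp
  have subalg_X: "subalgebra P0 ?GX" and subalg_O: "subalgebra P0 ?GO"
    using sets_P by (auto intro!: subalgebra_proc_sigma X_meas R_meas measurable_observation)
  have S_M: "S \<in> sets M"
    unfolding S_def using cadlag_const_path_set_in_sets[of M R] R_cadlag R_meas by simp
  have S_O: "S \<in> sets ?GO"
    unfolding S_def by (rule complete_observation_in_sets[OF R_cadlag])
  have "emeasure P1 (S \<inter> B) = (\<integral>\<^sup>+x. LR ?GX P1 P0 x * indicator (S \<inter> B) x \<partial>P0)"
    if "B \<in> sets ?GX" for B
    using emeasure_Int_eq_nn_integral_LR[OF finite sets_P1 abs_cont subalg_X _ that cond_exp_eq] S_M sets_P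
    by simp
  then have "AE \<omega> in P0. \<omega> \<in> S \<longrightarrow> LR ?GO P1 P0 \<omega> = LR ?GX P1 P0 \<omega>"
    by (rule AE_LR_eq_on_trace[OF finite sets_P1 abs_cont subalg_O
          S_O
          sets_restrict_complete_observation[of "space M" R X, folded S_def]
          measurable_LR[OF finite sets_P1 abs_cont subalg_X]])
  moreover have "AE \<omega> in P0. \<omega> \<in> space M"
    using AE_space[of P0] unfolding sets_eq_imp_space_eq[OF sets_P(1)] .
  ultimately show ?thesis
    by eventually_elim (auto simp: S_def)
qed

theorem mainTheorem1:
  fixes M :: "'a measure"
    and X :: "real \<Rightarrow> 'a \<Rightarrow> real^'d"
    and R :: "real \<Rightarrow> 'a \<Rightarrow> real^'d"
    and P :: "'th \<Rightarrow> 'ps \<Rightarrow> 'a measure"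
    and \<Theta> :: "'th set" and \<Psi> :: "'ps set"
    and \<theta>0 :: 'th
  assumes X_meas: "\<And>t. t \<ge> 0 \<Longrightarrow> X t \<in> borel_measurable M"
    and R_meas: "\<And>t. t \<ge> 0 \<Longrightarrow> R t \<in> borel_measurable M"
    and X_cadlag: "\<And>\<omega>. \<omega> \<in> space M \<Longrightarrow> cadlag (\<lambda>t. X t \<omega>)"
    and R_cadlag: "\<And>\<omega>. \<omega> \<in> space M \<Longrightarrow> cadlag (\<lambda>t. R t \<omega>)"
    and R_01: "\<And>t \<omega> i. t \<ge> 0 \<Longrightarrow> \<omega> \<in> space M \<Longrightarrow> R t \<omega> $ i \<in> {0, 1}"
    and F_gen: "sets M = sets (proc_sigma (space M) (\<lambda>t \<omega>. (X t \<omega>, R t \<omega>)))"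
    and \<theta>0_in: "\<theta>0 \<in> \<Theta>"
    and P_prob: "\<And>\<theta> \<psi>. \<theta> \<in> \<Theta> \<Longrightarrow> \<psi> \<in> \<Psi> \<Longrightarrow> prob_space (P \<theta> \<psi>)"
    and P_sets: "\<And>\<theta> \<psi>. \<theta> \<in> \<Theta> \<Longrightarrow> \<psi> \<in> \<Psi> \<Longrightarrow> sets (P \<theta> \<psi>) = sets M"
    and P_equiv: "\<And>\<theta>1 \<psi>1 \<theta>2 \<psi>2. \<theta>1 \<in> \<Theta> \<Longrightarrow> \<psi>1 \<in> \<Psi> \<Longrightarrow> \<theta>2 \<in> \<Theta> \<Longrightarrow> \<psi>2 \<in> \<Psi> \<Longrightarrow>
                  absolutely_continuous (P \<theta>1 \<psi>1) (P \<theta>2 \<psi>2)"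
    and P_X_theta: "\<And>\<theta> \<psi>1 \<psi>2 A. \<theta> \<in> \<Theta> \<Longrightarrow> \<psi>1 \<in> \<Psi> \<Longrightarrow> \<psi>2 \<in> \<Psi> \<Longrightarrow>
                  A \<in> sets (proc_sigma (space M) X) \<Longrightarrow>
                  emeasure (P \<theta> \<psi>1) A = emeasure (P \<theta> \<psi>2) A"
    and non_inf: "\<And>\<theta>1 \<theta>2 \<psi> A. \<theta>1 \<in> \<Theta> \<Longrightarrow> \<theta>2 \<in> \<Theta> \<Longrightarrow> \<psi> \<in> \<Psi> \<Longrightarrow>
                  A \<in> sets (proc_sigma (space M) R) \<Longrightarrow>
                  AE \<omega> in P \<theta>1 \<psi>.
                    real_cond_exp (P \<theta>1 \<psi>) (proc_sigma (space M) X) (indicator A) \<omega> =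
                    real_cond_exp (P \<theta>2 \<psi>) (proc_sigma (space M) X) (indicator A) \<omega>"
  shows "\<forall>\<theta>\<in>\<Theta>. \<forall>\<psi>0\<in>\<Psi>. AE \<omega> in P \<theta>0 \<psi>0.
           (\<forall>t\<ge>0. R t \<omega> = one_vec) \<longrightarrow>
           LR (proc_sigma (space M) (\<lambda>t \<omega>. (cmult (R t \<omega>) (X t \<omega>), R t \<omega>)))
              (P \<theta> \<psi>0) (P \<theta>0 \<psi>0) \<omega>
           = LR (proc_sigma (space M) X) (P \<theta> \<psi>0) (P \<theta>0 \<psi>0) \<omega>"
proof (intro ballI)
  fix \<theta> \<psi>0 assume \<theta>: "\<theta> \<in> \<Theta>" and \<psi>0: "\<psi>0 \<in> \<Psi>"
  have "{\<omega> \<in> space M. \<forall>t\<ge>0. R t \<omega> = one_vec} \<in> sets (proc_sigma (space M) R)"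
    using cadlag_const_path_set_in_sets[of "proc_sigma (space M) R" R] R_cadlag
    by (simp add: measurable_proc_sigma)
  then have "AE \<omega> in P \<theta>0 \<psi>0. (\<forall>t\<ge>0. R t \<omega> = one_vec) \<longrightarrow>
      LR (proc_sigma (space M) (observation R X)) (P \<theta> \<psi>0) (P \<theta>0 \<psi>0) \<omega> =
      LR (proc_sigma (space M) X) (P \<theta> \<psi>0) (P \<theta>0 \<psi>0) \<omega>"
    using \<theta>0_in \<theta> \<psi>0
    by (intro AE_LR_observation_eq_on_complete_observation X_meas R_meas R_cadlag non_inf P_sets
        P_equiv prob_space.finite_measure P_prob)
  then show "AE \<omega> in P \<theta>0 \<psi>0. (\<forall>t\<ge>0. R t \<omega> = one_vec) \<longrightarrow>
      LR (proc_sigma (space M) (\<lambda>t \<omega>. (cmult (R t \<omega>) (X t \<omega>), R t \<omega>))) (P \<theta> \<psi>0) (P \<theta>0 \<psi>0) \<omega> =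
      LR (proc_sigma (space M) X) (P \<theta> \<psi>0) (P \<theta>0 \<psi>0) \<omega>"
    by (simp add: observation_def[abs_def])
qed

end
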